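(* Let $X=\{a,b\}$ with $a\ne b$, and consider the commutative unital ring $(\mathcal{P}(X),\Delta,\cap)$, where addition is symmetric difference $B\Delta C=(B\cap C^c)\cup(C\cap B^c)$ (zero $\emptyset$) and multiplication is intersection (unit $X$). The irreducible $\lambda$-quiddities over this ring are exactly, up to cyclic permutation: - $(X,X,X)$; - $(\{a\},\{b\},\{a\},\{b\})$, $(\emptyset,\emptyset,\emptyset,\emptyset)$, $(\{a\},\emptyset,\{a\},\emptyset)$, $(\{b\},\emptyset,\{b\},\emptyset)$; - $(\{a\},\{a\},\{a\},\{a\},\{a\},\{a\})$ and $(\{b\},\{b\},\{b\},\{b\},\{b\},\{b\})$.
   Context: For $a_1,\ldots,a_n$ in a commutative unital ring $A$ (with unit $1$), $M_n(a_1,\ldots,a_n)=\begin{pmatrix}a_n&-1\\1&0\end{pmatrix}\cdots\begin{pmatrix}a_1&-1\\1&0\end{pmatrix}$. An $n$-tuple $(a_1,\ldots,a_n)\in A^n$ is a $\lambda$-quiddity over $A$ if $M_n(a_1,\ldots,a_n)=\pm\mathrm{Id}$. For $(a_1,\ldots,a_n)\in A^n$, $(b_1,\ldots,b_m)\in A^m$, define $(a_1,\ldots,a_n)\oplus(b_1,\ldots,b_m)=(a_1+b_m,a_2,\ldots,a_{n-1},a_n+b_1,b_2,\ldots,b_{m-1})$. Write $(a_1,\ldots,a_n)\sim(b_1,\ldots,b_n)$ if $(b_1,\ldots,b_n)$ is obtained from $(a_1,\ldots,a_n)$ or from $(a_n,\ldots,a_1)$ by a cyclic permutation. A $\lambda$-quiddity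 $(c_1,\ldots,c_n)$ with $n\ge3$ is reducible if there exist a $\lambda$-quiddity $(b_1,\ldots,b_l)$ and a tuple $(a_1,\ldots,a_m)$ with $l,m\ge3$ and $(c_1,\ldots,c_n)\sim(a_1,\ldots,a_m)\oplus(b_1,\ldots,b_l)$; it is irreducible otherwise (by convention $(0,0)$ is reducible). *)

theory Defs
  imports "HOL-Algebra.Ring"
begin

text \<open>2x2 matrices over a ring R, as tuples (p, q, r, s) = [[p, q], [r, s]].\<close>
type_synonym 'a mat2 = "'a \<times> 'a \<times> 'a \<times> 'a"

definition mat2_mult :: "('a, 'b) ring_scheme \<Rightarrow> 'a mat2 \<Rightarrow> 'a mat2 \<Rightarrow> 'a mat2" where
  "mat2_mult R A B = (case A of (p, q, r, s) \<Rightarrow> case B of (p', q', r', s') \<Rightarrow>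
     (p \<otimes>\<^bsub>R\<^esub> p' \<oplus>\<^bsub>R\<^esub> q \<otimes>\<^bsub>R\<^esub> r',
      p \<otimes>\<^bsub>R\<^esub> q' \<oplus>\<^bsub>R\<^esub> q \<otimes>\<^bsub>R\<^esub> s',
      r \<otimes>\<^bsub>R\<^esub> p' \<oplus>\<^bsub>R\<^esub> s \<otimes>\<^bsub>R\<^esub> r',
      r \<otimes>\<^bsub>R\<^esub> q' \<oplus>\<^bsub>R\<^esub> s \<otimes>\<^bsub>R\<^esub> s'))"

definition mat2_id :: "('a, 'b) ring_scheme \<Rightarrow> 'a mat2" where
  "mat2_id R = (\<one>\<^bsub>R\<^esub>, \<zero>\<^bsub>R\<^esub>, \<zero>\<^bsub>R\<^esub>, \<one>\<^bsub>R\<^esub>)"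

definition mat2_neg_id :: "('a, 'b) ring_scheme \<Rightarrow> 'a mat2" where
  "mat2_neg_id R = (\<ominus>\<^bsub>R\<^esub> \<one>\<^bsub>R\<^esub>, \<zero>\<^bsub>R\<^esub>, \<zero>\<^bsub>R\<^esub>, \<ominus>\<^bsub>R\<^esub> \<one>\<^bsub>R\<^esub>)"

definition mat2_elem :: "('a, 'b) ring_scheme \<Rightarrow> 'a \<Rightarrow> 'a mat2" where
  "mat2_elem R x = (x, \<ominus>\<^bsub>R\<^esub> \<one>\<^bsub>R\<^esub>, \<one>\<^bsub>R\<^esub>, \<zero>\<^bsub>R\<^esub>)"

definition Mq :: "('a, 'b) ring_scheme \<Rightarrow> 'a list \<Rightarrow> 'a mat2" where
  "Mq R xs = foldl (\<lambda>M x. mat2_mult R (mat2_elem R x) M) (mat2_id R) xs"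

definition lambda_quiddity :: "('a, 'b) ring_scheme \<Rightarrow> 'a list \<Rightarrow> bool" where
  "lambda_quiddity R c \<longleftrightarrow> c \<noteq> [] \<and> set c \<subseteq> carrier R \<and>
     (Mq R c = mat2_id R \<or> Mq R c = mat2_neg_id R)"

definition qsum :: "('a, 'b) ring_scheme \<Rightarrow> 'a list \<Rightarrow> 'a list \<Rightarrow> 'a list" where
  "qsum R as bs = [hd as \<oplus>\<^bsub>R\<^esub> last bs] @ butlast (tl as) @ [last as \<oplus>\<^bsub>R\<^esub> hd bs] @ butlast (tl bs)"

definition qequiv :: "'a list \<Rightarrow> 'a list \<Rightarrow> bool" where
  "qequiv c d \<longleftrightarrow> (\<exists>k. d = rotate k c \<or> d = rotate k (rev c))"

definition q_reducible :: "('a, 'b) ring_scheme \<Rightarrow> 'a list \<Rightarrow> bool" where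
  "q_reducible R c \<longleftrightarrow> c = [\<zero>\<^bsub>R\<^esub>, \<zero>\<^bsub>R\<^esub>] \<or>
     (length c \<ge> 3 \<and> (\<exists>as bs. lambda_quiddity R bs \<and> length bs \<ge> 3 \<and>
        length as \<ge> 3 \<and> set as \<subseteq> carrier R \<and> qequiv c (qsum R as bs)))"

definition q_irreducible :: "('a, 'b) ring_scheme \<Rightarrow> 'a list \<Rightarrow> bool" where
  "q_irreducible R c \<longleftrightarrow> lambda_quiddity R c \<and> \<not> q_reducible R c"

definition powerset_ring :: "'a \<Rightarrow> 'a \<Rightarrow> 'a set ring" where
  "powerset_ring a b = \<lparr>carrier = Pow {a, b}, mult = (\<inter>), one = {a, b},
      zero = {}, add = (\<lambda>B C. (B \<inter> - C) \<union> (C \<inter> - B))\<rparr>"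

end

theory Submission
  imports Defs
begin

text \<open>Symmetric difference has characteristic 2, so \<open>-Id = Id\<close> and a \<open>\<lambda>\<close>-quiddity is a tuple
  with \<open>M = Id\<close>. A tuple is reducible as soon as some rotation of it ends with the interior of a
  shorter \<open>\<lambda>\<close>-quiddity and at least three further entries remain. With \<open>X = {a, b}\<close>, \<open>(X, X, X)\<close> is a
  \<open>\<lambda>\<close>-quiddity with interior \<open>(X)\<close>, and \<open>(v, u, v, u)\<close> is one with interior \<open>(u, v)\<close> unless
  \<open>u = v\<close> is a singleton. Hence an irreducible \<open>\<lambda>\<close>-quiddity of length at least 5 is constant
  \<open>{a}\<close> or \<open>{b}\<close>; among these only length 6 survives (length 5 is not a \<open>\<lambda>\<close>-quiddity, longer
  ones split off the 6-tuple). Lengths at most 4 are settled by computing \<open>M\<close>. Conversely, a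
  decomposition of a listed tuple would need a shorter \<open>\<lambda>\<close>-quiddity whose interior occurs in it,
  which the same computations exclude.\<close>

lemma list_cons_snoc_of_length_ge_2:
  assumes "length xs \<ge> 2" obtains x mid z where "xs = x # mid @ [z]"
proof (cases xs)
  case (Cons x ys)
  with assms have "ys \<noteq> []" by auto
  then have "ys = butlast ys @ [last ys]" by simp
  with Cons show ?thesis using that by blast
qed (use assms in simp)

lemma q_reducible_if_rotate_eq_append_interior:
  assumes R: "abelian_group R"
    and bs: "lambda_quiddity R bs" "length bs \<ge> 3"
    and c: "set c \<subseteq> carrier R" "rotate k c = xs @ butlast (tl bs)" "length xs \<ge> 3"
  shows "q_reducible R c"
proof -
  from c(3) have "length xs \<ge> 2" by simp
  then obtain x mid z where xs: "xs = x # mid @ [z]"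
    by (rule list_cons_snoc_of_length_ge_2)
  have "set xs \<subseteq> carrier R"
    using c(1) arg_cong[OF c(2), of set] by auto
  then have x: "x \<in> carrier R" "z \<in> carrier R" "set mid \<subseteq> carrier R" by (auto simp: xs)
  have "bs \<noteq> []" "set bs \<subseteq> carrier R" using bs by (auto simp: lambda_quiddity_def)
  then have ends: "hd bs \<in> carrier R" "last bs \<in> carrier R" by auto
  \<comment> \<open>subtracting the ends of \<open>bs\<close> here is undone by the additions in \<open>qsum\<close>\<close>
  define as where "as = (x \<ominus>\<^bsub>R\<^esub> last bs) # mid @ [z \<ominus>\<^bsub>R\<^esub> hd bs]"
  interpret abelian_group R by (rule R)
  have cancel: "(u \<ominus>\<^bsub>R\<^esub> v) \<oplus>\<^bsub>R\<^esub> v = u" if "u \<in> carrier R" "v \<in> carrier R" for u v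
    using that by (simp add: a_minus_def a_assoc l_neg)
  have "qsum R as bs = rotate k c"
    using c(2) x ends by (simp add: qsum_def as_def xs cancel)
  then have "qequiv c (qsum R as bs)" by (auto simp: qequiv_def)
  moreover have "length as \<ge> 3" "set as \<subseteq> carrier R"
    using c(3) x ends by (auto simp: as_def xs)
  moreover have "length c \<ge> 3"
    using arg_cong[OF c(2), of length] c(3) by simp
  ultimately show ?thesis
    using bs by (auto simp: q_reducible_def)
qed

lemma rotate_eq_append_cyclic_segment:
  assumes "m \<le> length c"
  obtains ys where "rotate (i + m) c = ys @ map (\<lambda>j. c ! ((i + j) mod length c)) [0..<m]"
    and "length ys = length c - m"
proof
  let ?d = "rotate (i + m) c" and ?n = "length c"
  show "?d = take (?n - m) ?d @ map (\<lambda>j. c ! ((i + j) mod ?n)) [0..<m]"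
  proof (rule nth_equalityI)
    fix j assume "j < length ?d"
    then show "?d ! j = (take (?n - m) ?d @ map (\<lambda>j. c ! ((i + j) mod ?n)) [0..<m]) ! j"
      using assms by (auto simp: nth_append nth_rotate algebra_simps le_mod_geq)
  qed (use assms in simp)
qed (use assms in simp)

lemma q_reducible_obtains_shorter_quiddity:
  assumes "q_reducible R c" "length c \<ge> 3"
  obtains bs where "lambda_quiddity R bs" "3 \<le> length bs" "length bs < length c"
    "set (butlast (tl bs)) \<subseteq> set c"
proof -
  obtain as bs where bs: "lambda_quiddity R bs" "length bs \<ge> 3" "length as \<ge> 3"
    and equiv: "qequiv c (qsum R as bs)"
    using assms by (auto simp: q_reducible_def)
  from equiv have "length (qsum R as bs) = length c" "set (qsum R as bs) = set c"
    by (auto simp: qequiv_def)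
  moreover have "length (qsum R as bs) = length as + length bs - 2"
    using bs by (simp add: qsum_def)
  moreover have "set (butlast (tl bs)) \<subseteq> set (qsum R as bs)"
    by (auto simp: qsum_def)
  ultimately show thesis
    using that bs by auto
qed

lemma q_irreducible_of_length_3:
  assumes "lambda_quiddity R c" "length c = 3"
  shows "q_irreducible R c"
  using assms q_reducible_obtains_shorter_quiddity[of R c] by (auto simp: q_irreducible_def)

lemma list_eq_replicate_if_adjacent_eq:
  assumes "\<And>i. Suc i < length xs \<Longrightarrow> xs ! Suc i = xs ! i"
  shows "xs = replicate (length xs) (xs ! 0)"
proof (rule nth_equalityI)
  fix i assume "i < length xs"
  then show "xs ! i = replicate (length xs) (xs ! 0) ! i"
    by (induction i) (simp_all add: assms)
qed simp

lemma cons_replicate_snoc_if_interior_subset: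
  assumes "length xs = n + 2" "set (butlast (tl xs)) \<subseteq> {u}"
  obtains x z where "xs = x # replicate n u @ [z]"
proof -
  from assms(1) have "length xs \<ge> 2" by simp
  then obtain x mid z where xs: "xs = x # mid @ [z]"
    by (rule list_cons_snoc_of_length_ge_2)
  then have "replicate (length mid) u = mid"
    using assms(2) by (intro replicate_length_same) auto
  with xs assms(1) that show thesis by auto
qed

lemma rotate_mod_2_if_rotate_2_id:
  assumes "rotate 2 xs = xs"
  shows "rotate k xs = rotate (k mod 2) xs"
proof -
  have "rotate (2 * q) xs = xs" for q
  proof (induction q)
    case (Suc q)
    have "rotate (2 * Suc q) xs = rotate 2 (rotate (2 * q) xs)"
      by (simp only: rotate_rotate mult_Suc_right)
    then show ?case
      by (simp only: Suc.IH assms)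
  qed simp
  then show ?thesis
    by (metis mod_mult_div_eq rotate_rotate)
qed

lemma rotations_if_rotate_2_id:
  assumes "\<And>t. t \<in> T \<Longrightarrow> rotate 2 t = t"
  shows "{c. \<exists>t \<in> T. \<exists>k. c = rotate k t} = T \<union> rotate1 ` T"
proof -
  have "rotate k t \<in> T \<union> rotate1 ` T" if "t \<in> T" for t k
  proof -
    have "k mod 2 = 0 \<or> k mod 2 = 1" by linarith
    with that show ?thesis
      using rotate_mod_2_if_rotate_2_id[OF assms[OF that], of k] by auto
  qed
  moreover have "c = rotate 0 c" "rotate1 c = rotate 1 c" for c :: "'a list" by simp_all
  ultimately show ?thesis by blast
qed

lemma subset_pair_cases:
  assumes "x \<subseteq> {a, b}"
  obtains "x = {}" | "x = {a}" | "x = {b}" | "x = {a, b}"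
  using assms by auto

lemma carrier_powerset_ring: "carrier (powerset_ring a b) = Pow {a, b}"
  by (simp add: powerset_ring_def)

lemma abelian_group_powerset_ring: "abelian_group (powerset_ring a b)"
  by (rule abelian_groupI) (auto simp: powerset_ring_def)

lemma powerset_ring_a_inv:
  assumes "x \<in> carrier (powerset_ring a b)"
  shows "\<ominus>\<^bsub>powerset_ring a b\<^esub> x = x"
proof (rule abelian_group.minus_equality[OF abelian_group_powerset_ring _ assms assms])
  show "x \<oplus>\<^bsub>powerset_ring a b\<^esub> x = \<zero>\<^bsub>powerset_ring a b\<^esub>"
    by (auto simp: powerset_ring_def)
qed

context
  fixes a b :: 'x
  assumes a_neq_b: "a \<noteq> b"
begin

abbreviation (input) PR :: "'x set ring" where "PR \<equiv> powerset_ring a b"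

lemma powerset_ring_add_table:
  "{} \<oplus>\<^bsub>PR\<^esub> x = x" "x \<oplus>\<^bsub>PR\<^esub> {} = x"
  "{a} \<oplus>\<^bsub>PR\<^esub> {a} = {}" "{a} \<oplus>\<^bsub>PR\<^esub> {b} = {a, b}" "{a} \<oplus>\<^bsub>PR\<^esub> {a, b} = {b}"
  "{b} \<oplus>\<^bsub>PR\<^esub> {a} = {a, b}" "{b} \<oplus>\<^bsub>PR\<^esub> {b} = {}" "{b} \<oplus>\<^bsub>PR\<^esub> {a, b} = {a}"
  "{a, b} \<oplus>\<^bsub>PR\<^esub> {a} = {b}" "{a, b} \<oplus>\<^bsub>PR\<^esub> {b} = {a}" "{a, b} \<oplus>\<^bsub>PR\<^esub> {a, b} = {}"
  using a_neq_b by (auto simp: powerset_ring_def)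

lemma powerset_ring_mult_table:
  "{} \<otimes>\<^bsub>PR\<^esub> x = {}" "x \<otimes>\<^bsub>PR\<^esub> {} = {}"
  "{a} \<otimes>\<^bsub>PR\<^esub> {a} = {a}" "{a} \<otimes>\<^bsub>PR\<^esub> {b} = {}" "{a} \<otimes>\<^bsub>PR\<^esub> {a, b} = {a}"
  "{b} \<otimes>\<^bsub>PR\<^esub> {a} = {}" "{b} \<otimes>\<^bsub>PR\<^esub> {b} = {b}" "{b} \<otimes>\<^bsub>PR\<^esub> {a, b} = {b}"
  "{a, b} \<otimes>\<^bsub>PR\<^esub> {a} = {a}" "{a, b} \<otimes>\<^bsub>PR\<^esub> {b} = {b}" "{a, b} \<otimes>\<^bsub>PR\<^esub> {a, b} = {a, b}"
  using a_neq_b by (auto simp: powerset_ring_def)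

lemma powerset_ring_distinct_elements:
  "{a} \<noteq> {b}" "{a} \<noteq> {a, b}" "{b} \<noteq> {a, b}"
  using a_neq_b by auto

lemma powerset_ring_constants: "\<one>\<^bsub>PR\<^esub> = {a, b}" "\<zero>\<^bsub>PR\<^esub> = {}" "\<ominus>\<^bsub>PR\<^esub> {a, b} = {a, b}"
  using powerset_ring_a_inv[of "{a, b}" a b] by (simp_all add: powerset_ring_def)

lemmas Mq_powerset_ring_simps = Mq_def mat2_mult_def mat2_elem_def mat2_id_def
  powerset_ring_constants powerset_ring_add_table powerset_ring_mult_table
  powerset_ring_distinct_elements powerset_ring_distinct_elements[symmetric]

lemma lambda_quiddity_powerset_ring_iff:
  "lambda_quiddity PR c \<longleftrightarrow> c \<noteq> [] \<and> set c \<subseteq> Pow {a, b} \<and> Mq PR c = mat2_id PR"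
  by (simp add: lambda_quiddity_def mat2_neg_id_def mat2_id_def powerset_ring_constants)
    (simp add: powerset_ring_def)

lemma not_lambda_quiddity_length_1: "\<not> lambda_quiddity PR [x]"
  by (auto simp: lambda_quiddity_powerset_ring_iff Mq_powerset_ring_simps)

lemma lambda_quiddity_length_2D:
  assumes "lambda_quiddity PR [x, y]" shows "x = {} \<and> y = {}"
proof -
  have "x \<subseteq> {a, b}" "y \<subseteq> {a, b}" "Mq PR [x, y] = mat2_id PR"
    using assms by (auto simp: lambda_quiddity_powerset_ring_iff)
  then show ?thesis
    by (elim subset_pair_cases) (simp_all add: Mq_powerset_ring_simps)
qed

lemma lambda_quiddity_length_3_iff:
  "lambda_quiddity PR [x, y, z] \<longleftrightarrow> x = {a, b} \<and> y = {a, b} \<and> z = {a, b}"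
proof
  assume "lambda_quiddity PR [x, y, z]"
  then have "x \<subseteq> {a, b}" "y \<subseteq> {a, b}" "z \<subseteq> {a, b}" "Mq PR [x, y, z] = mat2_id PR"
    by (auto simp: lambda_quiddity_powerset_ring_iff)
  then show "x = {a, b} \<and> y = {a, b} \<and> z = {a, b}"
    by (elim subset_pair_cases) (simp_all add: Mq_powerset_ring_simps)
qed (auto simp: lambda_quiddity_powerset_ring_iff Mq_powerset_ring_simps)

lemma lambda_quiddity_length_4_iff:
  assumes "{a, b} \<notin> set [x, y, z, w]"
  shows "lambda_quiddity PR [x, y, z, w] \<longleftrightarrow>
    set [x, y] \<subseteq> Pow {a, b} \<and> z = x \<and> w = y \<and> (x = y \<longrightarrow> x = {})"
proof
  assume "lambda_quiddity PR [x, y, z, w]"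
  then have "x \<subseteq> {a, b}" "y \<subseteq> {a, b}" "z \<subseteq> {a, b}" "w \<subseteq> {a, b}"
    "Mq PR [x, y, z, w] = mat2_id PR"
    by (auto simp: lambda_quiddity_powerset_ring_iff)
  with assms show "set [x, y] \<subseteq> Pow {a, b} \<and> z = x \<and> w = y \<and> (x = y \<longrightarrow> x = {})"
    by (elim subset_pair_cases) (simp_all add: Mq_powerset_ring_simps)
next
  assume "set [x, y] \<subseteq> Pow {a, b} \<and> z = x \<and> w = y \<and> (x = y \<longrightarrow> x = {})"
  then have "x \<subseteq> {a, b}" "y \<subseteq> {a, b}" "z = x" "w = y" "x = y \<longrightarrow> x = {}" by auto
  with assms show "lambda_quiddity PR [x, y, z, w]"
    by (elim subset_pair_cases)
      (simp_all add: lambda_quiddity_powerset_ring_iff Mq_powerset_ring_simps)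
qed

lemma not_lambda_quiddity_double_singleton:
  assumes "u \<in> {{a}, {b}}"
  shows "\<not> lambda_quiddity PR [x, u, u, w]"
proof
  assume "lambda_quiddity PR [x, u, u, w]"
  then have "x \<subseteq> {a, b}" "w \<subseteq> {a, b}" "Mq PR [x, u, u, w] = mat2_id PR"
    by (auto simp: lambda_quiddity_powerset_ring_iff)
  moreover have "u = {a} \<or> u = {b}" using assms by simp
  ultimately show False
    by (elim subset_pair_cases disjE) (simp_all add: Mq_powerset_ring_simps)
qed

lemma not_lambda_quiddity_triple_singleton:
  assumes "u \<in> {{a}, {b}}"
  shows "\<not> lambda_quiddity PR [x, u, u, u, w]"
proof
  assume "lambda_quiddity PR [x, u, u, u, w]"
  then have "x \<subseteq> {a, b}" "w \<subseteq> {a, b}" "Mq PR [x, u, u, u, w] = mat2_id PR"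
    by (auto simp: lambda_quiddity_powerset_ring_iff)
  moreover have "u = {a} \<or> u = {b}" using assms by simp
  ultimately show False
    by (elim subset_pair_cases disjE) (simp_all add: Mq_powerset_ring_simps)
qed

lemma lambda_quiddity_replicate_6:
  assumes "u \<in> {{a}, {b}}"
  shows "lambda_quiddity PR (replicate 6 u)"
  using assms by (auto simp: lambda_quiddity_powerset_ring_iff Mq_powerset_ring_simps numeral_eq_Suc)

lemma q_reducible_if_full_set_mem:
  assumes "set c \<subseteq> Pow {a, b}" "{a, b} \<in> set c" "length c \<ge> 4"
  shows "q_reducible PR c"
proof -
  obtain i where i: "i < length c" "c ! i = {a, b}"
    using assms(2) by (auto simp: in_set_conv_nth)
  obtain ys where "rotate (i + 1) c = ys @ map (\<lambda>j. c ! ((i + j) mod length c)) [0..<1]"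
    and "length ys = length c - 1"
    using rotate_eq_append_cyclic_segment[of 1 c i] assms(3) by auto
  with i assms show ?thesis
    by (intro q_reducible_if_rotate_eq_append_interior[where bs = "[{a, b}, {a, b}, {a, b}]"
          and k = "i + 1" and xs = ys])
      (simp_all add: abelian_group_powerset_ring carrier_powerset_ring lambda_quiddity_length_3_iff)
qed

lemma q_reducible_if_adjacent_pair:
  assumes "set c \<subseteq> Pow {a, b}" "{a, b} \<notin> set c" "length c \<ge> 5" "i < length c"
    and "c ! i = {} \<or> c ! ((i + 1) mod length c) \<noteq> c ! i"
  shows "q_reducible PR c"
proof -
  let ?u = "c ! i" and ?v = "c ! ((i + 1) mod length c)"
  obtain ys where "rotate (i + 2) c = ys @ map (\<lambda>j. c ! ((i + j) mod length c)) [0..<2]"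
    and "length ys = length c - 2"
    using rotate_eq_append_cyclic_segment[of 2 c i] assms(3) by auto
  moreover have "map (\<lambda>j. c ! ((i + j) mod length c)) [0..<2] = [?u, ?v]"
    using assms(4) by (simp add: upt_rec)
  ultimately have ys: "rotate (i + 2) c = ys @ [?u, ?v]" "length ys = length c - 2"
    by simp_all
  have "?u \<in> set c" "?v \<in> set c"
    using assms(3,4) by (auto intro!: nth_mem mod_less_divisor)
  then have "{a, b} \<notin> set [?v, ?u, ?v, ?u]" "set [?v, ?u] \<subseteq> Pow {a, b}"
    using assms(1,2) by auto
  moreover have "?v = ?u \<longrightarrow> ?v = {}"
    using assms(5) by auto
  ultimately have "lambda_quiddity PR [?v, ?u, ?v, ?u]"
    by (simp add: lambda_quiddity_length_4_iff)
  with ys assms show ?thesis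
    by (intro q_reducible_if_rotate_eq_append_interior[where bs = "[?v, ?u, ?v, ?u]"
          and k = "i + 2" and xs = ys])
      (simp_all add: abelian_group_powerset_ring carrier_powerset_ring)
qed

lemma q_reducible_replicate:
  assumes "u \<in> {{a}, {b}}" "n \<ge> 7"
  shows "q_reducible PR (replicate n u)"
proof (rule q_reducible_if_rotate_eq_append_interior[where k = 0 and bs = "replicate 6 u"])
  have "replicate n u = replicate (n - 4) u @ replicate 4 u"
    using assms(2) by (simp flip: replicate_add)
  then show "rotate 0 (replicate n u) = replicate (n - 4) u @ butlast (tl (replicate 6 u))"
    by (simp add: numeral_eq_Suc)
qed (use assms in \<open>auto simp: abelian_group_powerset_ring carrier_powerset_ring
  lambda_quiddity_replicate_6\<close>)

lemma q_irreducible_length_4: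
  assumes "lambda_quiddity PR c" "length c = 4" "{a, b} \<notin> set c"
  shows "q_irreducible PR c"
proof -
  have "\<not> q_reducible PR c"
  proof
    assume "q_reducible PR c"
    then obtain bs where bs: "lambda_quiddity PR bs" "length bs = 3"
      and interior: "set (butlast (tl bs)) \<subseteq> set c"
      using assms(2) by (auto elim: q_reducible_obtains_shorter_quiddity)
    then obtain x y z where "bs = [x, y, z]"
      by (auto simp: numeral_eq_Suc length_Suc_conv)
    with bs interior assms(3) show False
      by (simp add: lambda_quiddity_length_3_iff)
  qed
  with assms(1) show ?thesis by (simp add: q_irreducible_def)
qed

lemma q_irreducible_replicate_6:
  assumes u: "u \<in> {{a}, {b}}"
  shows "q_irreducible PR (replicate 6 u)"
proof -
  have "\<not> q_reducible PR (replicate 6 u)"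
  proof
    assume "q_reducible PR (replicate 6 u)"
    then obtain bs where bs: "lambda_quiddity PR bs" "3 \<le> length bs" "length bs < 6"
      and interior: "set (butlast (tl bs)) \<subseteq> {u}"
      by (auto elim: q_reducible_obtains_shorter_quiddity)
    consider "length bs = 1 + 2" | "length bs = 2 + 2" | "length bs = 3 + 2"
      using bs(2,3) by linarith
    then show False
    proof cases
      case 1
      from this interior obtain x z where "bs = x # replicate 1 u @ [z]"
        by (rule cons_replicate_snoc_if_interior_subset)
      with bs(1) u show False
        using a_neq_b by (auto simp: lambda_quiddity_length_3_iff)
    next
      case 2
      from this interior obtain x z where "bs = x # replicate 2 u @ [z]"
        by (rule cons_replicate_snoc_if_interior_subset)
      with bs(1) u show False
        using not_lambda_quiddity_double_singleton by (simp add: numeral_eq_Suc)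
    next
      case 3
      from this interior obtain x z where "bs = x # replicate 3 u @ [z]"
        by (rule cons_replicate_snoc_if_interior_subset)
      with bs(1) u show False
        using not_lambda_quiddity_triple_singleton by (simp add: numeral_eq_Suc)
    qed
  qed
  with u show ?thesis
    by (simp add: q_irreducible_def lambda_quiddity_replicate_6)
qed

lemma q_irreducible_length_ge_5:
  assumes "q_irreducible PR c" "length c \<ge> 5"
  obtains u where "u \<in> {{a}, {b}}" "c = replicate 6 u"
proof -
  have q: "lambda_quiddity PR c" and irr: "\<not> q_reducible PR c"
    using assms(1) by (simp_all add: q_irreducible_def)
  then have c: "set c \<subseteq> Pow {a, b}"
    by (simp add: lambda_quiddity_powerset_ring_iff)
  have full: "{a, b} \<notin> set c"
    using q_reducible_if_full_set_mem[OF c] assms(2) irr by auto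
  have adjacent: "c ! i \<noteq> {} \<and> c ! ((i + 1) mod length c) = c ! i" if "i < length c" for i
    using q_reducible_if_adjacent_pair[OF c full assms(2) that] irr by blast
  have c_eq: "c = replicate (length c) (c ! 0)"
  proof (rule list_eq_replicate_if_adjacent_eq)
    fix i assume "Suc i < length c"
    then show "c ! Suc i = c ! i"
      using adjacent[of i] by simp
  qed
  define u where "u = c ! 0"
  have "c \<noteq> []" using assms(2) by auto
  then have "u \<in> set c" "u \<noteq> {}"
    using adjacent[of 0] by (simp_all add: u_def)
  then have u: "u \<in> {{a}, {b}}"
    using c full by (auto elim: subset_pair_cases)
  have "length c = 6"
  proof (rule ccontr)
    assume "length c \<noteq> 6"
    then consider "length c = 5" | "length c \<ge> 7"
      using assms(2) by linarith
    then show False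
    proof cases
      case 1
      with q c_eq have "lambda_quiddity PR [u, u, u, u, u]"
        by (simp add: u_def numeral_eq_Suc)
      with u show False
        using not_lambda_quiddity_triple_singleton by blast
    next
      case 2
      with irr c_eq u show False
        using q_reducible_replicate by (metis u_def)
    qed
  qed
  with u c_eq that show thesis
    by (simp add: u_def)
qed

lemma q_irreducible_powerset_ring_iff:
  "q_irreducible PR c \<longleftrightarrow>
     c = [{a, b}, {a, b}, {a, b}] \<or>
     (\<exists>u v. c = [v, u, v, u] \<and> u \<in> {{}, {a}, {b}} \<and> v \<in> {{}, {a}, {b}} \<and> (v = u \<longrightarrow> v = {})) \<or>
     (\<exists>u \<in> {{a}, {b}}. c = replicate 6 u)"
    (is "_ \<longleftrightarrow> ?full \<or> ?alternating \<or> ?constant")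
proof
  assume irr: "q_irreducible PR c"
  then have q: "lambda_quiddity PR c" and red: "\<not> q_reducible PR c"
    by (simp_all add: q_irreducible_def)
  then have c: "c \<noteq> []" "set c \<subseteq> Pow {a, b}"
    by (simp_all add: lambda_quiddity_powerset_ring_iff)
  from c(1) have "length c \<ge> 1" by (simp add: Suc_le_eq)
  then consider "length c = 1" | "length c = 2" | "length c = 3" | "length c = 4" | "length c \<ge> 5"
    by linarith
  then show "?full \<or> ?alternating \<or> ?constant"
  proof cases
    case 1
    then obtain x where "c = [x]" by (auto simp: length_Suc_conv)
    with q show ?thesis by (simp add: not_lambda_quiddity_length_1)
  next
    case 2
    then obtain x y where "c = [x, y]" by (auto simp: numeral_eq_Suc length_Suc_conv)
    with q red show ?thesis
      by (auto dest: lambda_quiddity_length_2D simp: q_reducible_def powerset_ring_constants)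
  next
    case 3
    then obtain x y z where "c = [x, y, z]" by (auto simp: numeral_eq_Suc length_Suc_conv)
    with q show ?thesis by (simp add: lambda_quiddity_length_3_iff)
  next
    case 4
    then obtain x y z w where c_eq: "c = [x, y, z, w]" by (auto simp: numeral_eq_Suc length_Suc_conv)
    have "{a, b} \<notin> set c"
      using q_reducible_if_full_set_mem[OF c(2)] 4 red by auto
    with q c_eq have "z = x \<and> w = y \<and> x \<in> {{}, {a}, {b}} \<and> y \<in> {{}, {a}, {b}} \<and> (x = y \<longrightarrow> x = {})"
      by (auto simp: lambda_quiddity_length_4_iff elim: subset_pair_cases)
    with c_eq show ?thesis by blast
  next
    case 5
    with irr obtain u where "u \<in> {{a}, {b}}" "c = replicate 6 u"
      by (rule q_irreducible_length_ge_5)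
    then show ?thesis by (intro disjI2) blast
  qed
next
  assume "?full \<or> ?alternating \<or> ?constant"
  then show "q_irreducible PR c"
  proof (elim disjE exE conjE bexE)
    assume "c = [{a, b}, {a, b}, {a, b}]"
    then show ?thesis
      by (simp add: q_irreducible_of_length_3 lambda_quiddity_length_3_iff)
  next
    fix u v assume "c = [v, u, v, u]" "u \<in> {{}, {a}, {b}}" "v \<in> {{}, {a}, {b}}" "v = u \<longrightarrow> v = {}"
    with a_neq_b show ?thesis
      by (auto intro!: q_irreducible_length_4 simp: lambda_quiddity_length_4_iff)
  next
    fix u assume "u \<in> {{a}, {b}}" "c = replicate 6 u"
    then show ?thesis by (simp add: q_irreducible_replicate_6)
  qed
qed

end

theorem proposition3p6:
  fixes a b :: 'x
  assumes "a \<noteq> b"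
  shows "{c. q_irreducible (powerset_ring a b) c} =
    {c. \<exists>t \<in> {[{a,b}, {a,b}, {a,b}],
              [{a}, {b}, {a}, {b}], [{}, {}, {}, {}], [{a}, {}, {a}, {}], [{b}, {}, {b}, {}],
              [{a}, {a}, {a}, {a}, {a}, {a}], [{b}, {b}, {b}, {b}, {b}, {b}]}.
          \<exists>k. c = rotate k t}"
    (is "_ = {c. \<exists>t \<in> ?T. \<exists>k. c = rotate k t}")
proof -
  have "{c. \<exists>t \<in> ?T. \<exists>k. c = rotate k t} = ?T \<union> rotate1 ` ?T"
    by (rule rotations_if_rotate_2_id) (auto simp: numeral_eq_Suc)
  also have "\<dots> = {c. c = [{a, b}, {a, b}, {a, b}] \<or>
      (\<exists>u v. c = [v, u, v, u] \<and> u \<in> {{}, {a}, {b}} \<and> v \<in> {{}, {a}, {b}} \<and> (v = u \<longrightarrow> v = {})) \<or>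
      (\<exists>u \<in> {{a}, {b}}. c = replicate 6 u)}"
    using assms
    by (intro Set.set_eqI iffI; elim UnE imageE CollectE disjE exE conjE bexE insertE emptyE)
      (simp_all add: numeral_eq_Suc)
  also have "\<dots> = {c. q_irreducible (powerset_ring a b) c}"
    by (simp only: q_irreducible_powerset_ring_iff[OF assms])
  finally show ?thesis ..
qed

end
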